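(* A rooted labeled forest that avoids $132$ avoids $2314$ if and only if it is a $P_1$-forest.
   Context: Rooted labeled forests are unordered forests with a distinguished root in each component and distinct integer labels $L(v)$. The ancestors of $v$ are the vertices on the path from the root of its component to $v$ (including $v$). An instance of a pattern $\pi$ of length $k$ is a sequence $v_1,\dots,v_k$ with $v_i$ a strict ancestor of $v_{i+1}$ and labels in the same relative order as $\pi$; a forest avoids $\pi$ if it has no instance. A vertex $v$ is a top-down minimum (TDM) if $L(u)\ge L(v)$ for every ancestor $u$ of $v$; other vertices are non-TDM. A non-TDM vertex $v$ is special if the path from the root to $v$ contains vertices $v_1,v_2,v_3,v_4$ in that order (not necessarily consecutive) with $v_1,v_3$ TDM and $v_2,v_4$ non-TDM. The ceiling of a special vertex $v$ is its lowest ancestor $u$ such that the path from $u$ to $v$ contains vertices $v_1,v_2,v_3,v_4$ in that order with $v_1,v_3$ TDM and $v_2,v_4$ non-TDM. A $P_1$-forest is a forest in which every special vertex $v$ with ceiling $u$ satisfies $L(u)>L(v)$. *)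

theory Defs
  imports Main
begin

text \<open>A rooted labeled forest: a finite vertex set V, a parent map p
  (p v = None iff v is a root), acyclic; labels L :: 'a => int injective on V.\<close>

definition par_rel :: "'a set \<Rightarrow> ('a \<Rightarrow> 'a option) \<Rightarrow> ('a \<times> 'a) set" where
  "par_rel V p = {(v, u). v \<in> V \<and> p v = Some u}"

definition rooted_forest :: "'a set \<Rightarrow> ('a \<Rightarrow> 'a option) \<Rightarrow> bool" where
  "rooted_forest V p \<longleftrightarrow> finite V \<and> (\<forall>v\<in>V. \<forall>u. p v = Some u \<longrightarrow> u \<in> V)
      \<and> acyclic (par_rel V p)"

definition anc :: "'a set \<Rightarrow> ('a \<Rightarrow> 'a option) \<Rightarrow> 'a \<Rightarrow> 'a \<Rightarrow> bool" where
  "anc V p u v \<longleftrightarrow> v \<in> V \<and> (v, u) \<in> (par_rel V p)\<^sup>*"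

definition sanc :: "'a set \<Rightarrow> ('a \<Rightarrow> 'a option) \<Rightarrow> 'a \<Rightarrow> 'a \<Rightarrow> bool" where
  "sanc V p u v \<longleftrightarrow> v \<in> V \<and> (v, u) \<in> (par_rel V p)\<^sup>+"

text \<open>Patterns are lists of naturals (permutations, e.g. [1,3,2] for 132).\<close>
definition contains_pat :: "'a set \<Rightarrow> ('a \<Rightarrow> 'a option) \<Rightarrow> ('a \<Rightarrow> int) \<Rightarrow> nat list \<Rightarrow> bool" where
  "contains_pat V p L \<pi> \<longleftrightarrow> (\<exists>vs. length vs = length \<pi> \<and> set vs \<subseteq> V
      \<and> (\<forall>i. Suc i < length vs \<longrightarrow> sanc V p (vs ! i) (vs ! Suc i))
      \<and> (\<forall>i<length vs. \<forall>j<length vs. L (vs ! i) < L (vs ! j) \<longleftrightarrow> \<pi> ! i < \<pi> ! j))"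

definition avoids_pat :: "'a set \<Rightarrow> ('a \<Rightarrow> 'a option) \<Rightarrow> ('a \<Rightarrow> int) \<Rightarrow> nat list \<Rightarrow> bool" where
  "avoids_pat V p L \<pi> \<longleftrightarrow> \<not> contains_pat V p L \<pi>"

definition TDM :: "'a set \<Rightarrow> ('a \<Rightarrow> 'a option) \<Rightarrow> ('a \<Rightarrow> int) \<Rightarrow> 'a \<Rightarrow> bool" where
  "TDM V p L v \<longleftrightarrow> v \<in> V \<and> (\<forall>u. anc V p u v \<longrightarrow> L v \<le> L u)"

definition tntn_between :: "'a set \<Rightarrow> ('a \<Rightarrow> 'a option) \<Rightarrow> ('a \<Rightarrow> int) \<Rightarrow> 'a \<Rightarrow> 'a \<Rightarrow> bool" where
  "tntn_between V p L u v \<longleftrightarrow> (\<exists>v1 v2 v3 v4.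
      anc V p u v1 \<and> anc V p v1 v2 \<and> anc V p v2 v3 \<and> anc V p v3 v4 \<and> anc V p v4 v
      \<and> TDM V p L v1 \<and> v2 \<in> V \<and> \<not> TDM V p L v2 \<and> TDM V p L v3 \<and> v4 \<in> V \<and> \<not> TDM V p L v4)"

definition special :: "'a set \<Rightarrow> ('a \<Rightarrow> 'a option) \<Rightarrow> ('a \<Rightarrow> int) \<Rightarrow> 'a \<Rightarrow> bool" where
  "special V p L v \<longleftrightarrow> v \<in> V \<and> \<not> TDM V p L v \<and> (\<exists>u. anc V p u v \<and> tntn_between V p L u v)"

definition ceiling_of :: "'a set \<Rightarrow> ('a \<Rightarrow> 'a option) \<Rightarrow> ('a \<Rightarrow> int) \<Rightarrow> 'a \<Rightarrow> 'a \<Rightarrow> bool" where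
  "ceiling_of V p L u v \<longleftrightarrow> anc V p u v \<and> tntn_between V p L u v
      \<and> (\<forall>w. anc V p w v \<and> tntn_between V p L w v \<longrightarrow> anc V p w u)"

definition P1_forest :: "'a set \<Rightarrow> ('a \<Rightarrow> 'a option) \<Rightarrow> ('a \<Rightarrow> int) \<Rightarrow> bool" where
  "P1_forest V p L \<longleftrightarrow> (\<forall>v u. special V p L v \<and> ceiling_of V p L u v \<longrightarrow> L u > L v)"

end

(*
  In a 132-avoiding forest with distinct labels, whenever x is a strict ancestor of y, y of z,
  and L x < L z, also L y < L z; and a TDM vertex is smaller than all its strict ancestors.

  If a special vertex v had a ceiling u with L u \<le> L v, take the witnesses v2 (non-TDM)
  and v3 (TDM) between u and v, and the ancestor k of v2 of minimal label: then
  L v3 < L k < L v2 < L v, so k, v2, v3, v is an occurrence of 2314.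

  Conversely, let a, b, c, d be an occurrence of 2314 and m1, m3 the ancestors of minimal
  label of a and c; both are TDM, and m3 lies below b since otherwise m3, b, c would be an
  occurrence of 132. So m1, b, m3, d show that d is special, and its ceiling is a TDM
  descendant of m1, whose label is at most L m1 \<le> L a < L d: the forest is not a P_1-forest.
*)

theory Submission
  imports Defs
begin

lemma anc_refl: "v \<in> V \<Longrightarrow> anc V p v v"
  unfolding anc_def by simp

lemma anc_trans: "anc V p u w \<Longrightarrow> anc V p w v \<Longrightarrow> anc V p u v"
  unfolding anc_def by auto

lemma sanc_anc_trans: "sanc V p u w \<Longrightarrow> anc V p w v \<Longrightarrow> sanc V p u v"
  unfolding sanc_def anc_def by (meson rtrancl_trancl_trancl)

lemma sanc_trans: "sanc V p u w \<Longrightarrow> sanc V p w v \<Longrightarrow> sanc V p u v"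
  unfolding sanc_def by auto

lemma tntn_between_anc: "tntn_between V p L u v \<Longrightarrow> anc V p u v"
  unfolding tntn_between_def by (elim exE conjE) (blast intro: anc_trans)

lemma ex_list_length_3:
  "(\<exists>xs. length xs = Suc (Suc (Suc 0)) \<and> P xs) \<longleftrightarrow> (\<exists>x y z. P [x, y, z])"
  by (auto simp: length_Suc_conv) metis

lemma ex_list_length_4:
  "(\<exists>xs. length xs = Suc (Suc (Suc (Suc 0))) \<and> P xs) \<longleftrightarrow> (\<exists>a b c d. P [a, b, c, d])"
  by (auto simp: length_Suc_conv) metis

context
  fixes V :: "'a set" and p :: "'a \<Rightarrow> 'a option" and L :: "'a \<Rightarrow> int"
  assumes forest: "rooted_forest V p"
begin

lemma rtrancl_par_rel_closed: "(v, u) \<in> (par_rel V p)\<^sup>* \<Longrightarrow> v \<in> V \<Longrightarrow> u \<in> V"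
  by (induction rule: rtrancl_induct) (use forest in \<open>auto simp: rooted_forest_def par_rel_def\<close>)

lemma anc_in_V: "anc V p u v \<Longrightarrow> u \<in> V \<and> v \<in> V"
  unfolding anc_def using rtrancl_par_rel_closed by blast

lemma sanc_iff_anc_neq: "sanc V p u v \<longleftrightarrow> anc V p u v \<and> u \<noteq> v"
  using forest unfolding rooted_forest_def acyclic_def sanc_def anc_def
  by (auto simp: rtrancl_eq_or_trancl)

lemma sanc_in_V: "sanc V p u v \<Longrightarrow> u \<in> V \<and> v \<in> V"
  using sanc_iff_anc_neq anc_in_V by blast

lemma anc_antisym: "anc V p u v \<Longrightarrow> anc V p v u \<Longrightarrow> u = v"
  using forest unfolding rooted_forest_def acyclic_def anc_def
  by (metis rtrancl_eq_or_trancl rtrancl_trancl_trancl)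

lemma anc_linear:
  assumes "anc V p x v" "anc V p y v"
  shows "anc V p x y \<or> anc V p y x"
proof -
  have "single_valued (par_rel V p)"
    unfolding single_valued_def par_rel_def by simp
  moreover have "(v, x) \<in> (par_rel V p)\<^sup>*" "(v, y) \<in> (par_rel V p)\<^sup>*"
    using assms unfolding anc_def by simp_all
  ultimately have "(x, y) \<in> (par_rel V p)\<^sup>* \<or> (y, x) \<in> (par_rel V p)\<^sup>*"
    by (rule single_valued_confluent)
  then show ?thesis
    using assms anc_in_V unfolding anc_def by auto
qed

lemma wf_trancl_par_rel: "wf ((par_rel V p)\<^sup>+)"
proof -
  have "par_rel V p \<subseteq> V \<times> V"
    using forest unfolding rooted_forest_def par_rel_def by auto
  then have "finite (par_rel V p)"
    using forest finite_subset unfolding rooted_forest_def by blast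
  then show ?thesis
    using forest finite_acyclic_wf wf_trancl unfolding rooted_forest_def by blast
qed

lemma contains_132_iff:
  "contains_pat V p L [1, 3, 2] \<longleftrightarrow>
    (\<exists>x y z. sanc V p x y \<and> sanc V p y z \<and> L x < L z \<and> L z < L y)"
proof
  assume "contains_pat V p L [1, 3, 2]"
  then show "\<exists>x y z. sanc V p x y \<and> sanc V p y z \<and> L x < L z \<and> L z < L y"
    unfolding contains_pat_def
    by (simp only: length_Cons list.size(3) ex_list_length_3) (auto simp: numeral_eq_Suc All_less_Suc)
next
  assume "\<exists>x y z. sanc V p x y \<and> sanc V p y z \<and> L x < L z \<and> L z < L y"
  then obtain x y z where "sanc V p x y" "sanc V p y z" "L x < L z" "L z < L y"
    by blast
  then show "contains_pat V p L [1, 3, 2]"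
    unfolding contains_pat_def
    by (intro exI[of _ "[x, y, z]"]) (auto simp: numeral_eq_Suc All_less_Suc dest: sanc_in_V)
qed

lemma contains_2314_iff:
  "contains_pat V p L [2, 3, 1, 4] \<longleftrightarrow>
    (\<exists>a b c d. sanc V p a b \<and> sanc V p b c \<and> sanc V p c d
      \<and> L c < L a \<and> L a < L b \<and> L b < L d)"
proof
  assume "contains_pat V p L [2, 3, 1, 4]"
  then show "\<exists>a b c d. sanc V p a b \<and> sanc V p b c \<and> sanc V p c d
      \<and> L c < L a \<and> L a < L b \<and> L b < L d"
    unfolding contains_pat_def
    by (simp only: length_Cons list.size(3) ex_list_length_4) (auto simp: numeral_eq_Suc All_less_Suc)
next
  assume "\<exists>a b c d. sanc V p a b \<and> sanc V p b c \<and> sanc V p c d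
      \<and> L c < L a \<and> L a < L b \<and> L b < L d"
  then obtain a b c d where "sanc V p a b" "sanc V p b c" "sanc V p c d"
    "L c < L a" "L a < L b" "L b < L d"
    by blast
  then show "contains_pat V p L [2, 3, 1, 4]"
    unfolding contains_pat_def
    by (intro exI[of _ "[a, b, c, d]"]) (auto simp: numeral_eq_Suc All_less_Suc dest: sanc_in_V)
qed

lemma sanc_label_neq: "inj_on L V \<Longrightarrow> sanc V p u v \<Longrightarrow> L u \<noteq> L v"
  using sanc_in_V sanc_iff_anc_neq inj_onD by metis

lemma TDM_label_less:
  assumes inj: "inj_on L V" and "TDM V p L v" "sanc V p u v"
  shows "L v < L u"
proof -
  have "L v \<le> L u"
    using assms(2,3) sanc_iff_anc_neq unfolding TDM_def by blast
  then show ?thesis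
    using sanc_label_neq[OF inj assms(3)] by simp
qed

lemma not_TDM_if_label_less: "anc V p u v \<Longrightarrow> L u < L v \<Longrightarrow> \<not> TDM V p L v"
  unfolding TDM_def by (meson not_le)

lemma ex_min_label_ancestor:
  assumes "v \<in> V"
  obtains k where "anc V p k v" "TDM V p L k" "\<And>x. anc V p x v \<Longrightarrow> L k \<le> L x"
proof -
  let ?A = "{x. anc V p x v}"
  have "?A \<subseteq> V"
    using anc_in_V by blast
  then have A_finite: "finite ?A"
    using forest finite_subset unfolding rooted_forest_def by blast
  have A_nonempty: "?A \<noteq> {}"
    using anc_refl[OF assms] by blast
  define k where "k = arg_min_on L ?A"
  have k_anc: "anc V p k v"
    unfolding k_def using arg_min_if_finite(1)[OF A_finite A_nonempty] by simp
  have k_min: "L k \<le> L x" if "anc V p x v" for x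
    unfolding k_def using arg_min_least[OF A_finite A_nonempty] that by simp
  have "L k \<le> L u" if "anc V p u k" for u
    using k_min[OF anc_trans[OF that k_anc]] .
  then have "TDM V p L k"
    using anc_in_V[OF k_anc] unfolding TDM_def by blast
  moreover note k_anc k_min
  ultimately show ?thesis
    using that by blast
qed

lemma no_132_label_less:
  assumes inj: "inj_on L V" and no132: "\<not> contains_pat V p L [1, 3, 2]"
    and "sanc V p x y" "sanc V p y z" "L x < L z"
  shows "L y < L z"
proof -
  have "\<not> L z < L y"
    using no132 contains_132_iff assms(3-5) by blast
  moreover have "L y \<noteq> L z"
    using sanc_label_neq[OF inj assms(4)] .
  ultimately show ?thesis
    by linarith
qed

lemma ceiling_TDM:
  assumes "ceiling_of V p L u v"
  shows "TDM V p L u"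
proof -
  obtain v1 v2 v3 v4 where v1: "anc V p u v1" "TDM V p L v1" and
    path: "anc V p v1 v2" "anc V p v2 v3" "anc V p v3 v4" "anc V p v4 v"
      "v2 \<in> V" "\<not> TDM V p L v2" "TDM V p L v3" "v4 \<in> V" "\<not> TDM V p L v4"
    using assms unfolding ceiling_of_def tntn_between_def by blast
  have "v1 \<in> V"
    using anc_in_V[OF v1(1)] by blast
  then have v1_between: "tntn_between V p L v1 v"
    unfolding tntn_between_def using anc_refl[OF \<open>v1 \<in> V\<close>] v1(2) path by blast
  then have "anc V p v1 u"
    using assms tntn_between_anc[OF v1_between] unfolding ceiling_of_def by blast
  then show ?thesis
    using anc_antisym[OF v1(1)] v1(2) by simp
qed

lemma ceiling_label_le:
  assumes "ceiling_of V p L u v" "tntn_between V p L w v"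
  shows "L u \<le> L w"
proof -
  have "anc V p w u"
    using assms tntn_between_anc[OF assms(2)] unfolding ceiling_of_def by blast
  then show ?thesis
    using ceiling_TDM[OF assms(1)] unfolding TDM_def by blast
qed

lemma ceiling_exists:
  assumes "tntn_between V p L w v"
  obtains u where "ceiling_of V p L u v"
proof -
  let ?S = "{u. tntn_between V p L u v}"
  obtain u where u: "tntn_between V p L u v"
    and lowest: "\<And>y. (y, u) \<in> (par_rel V p)\<^sup>+ \<Longrightarrow> \<not> tntn_between V p L y v"
    using wf_eq_minimal[THEN iffD1, OF wf_trancl_par_rel, rule_format, of w ?S] assms by blast
  have "anc V p y u" if y: "tntn_between V p L y v" for y
  proof -
    have "anc V p y u \<or> anc V p u y"
      using anc_linear[OF tntn_between_anc[OF y] tntn_between_anc[OF u]] .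
    moreover have "\<not> sanc V p u y"
      using lowest y unfolding sanc_def by blast
    ultimately show ?thesis
      using sanc_iff_anc_neq by blast
  qed
  then show ?thesis
    using that u tntn_between_anc[OF u] unfolding ceiling_of_def by blast
qed

lemma contains_2314_if_tntn_between:
  assumes inj: "inj_on L V" and no132: "\<not> contains_pat V p L [1, 3, 2]"
    and between: "tntn_between V p L u v" and le: "L u \<le> L v"
  shows "contains_pat V p L [2, 3, 1, 4]"
proof -
  obtain v1 v2 v3 v4 where path: "anc V p u v1" "anc V p v1 v2" "anc V p v2 v3" "anc V p v3 v4"
      "anc V p v4 v" "TDM V p L v1" "v2 \<in> V" "\<not> TDM V p L v2" "TDM V p L v3"
      "v4 \<in> V" "\<not> TDM V p L v4"
    using between unfolding tntn_between_def by blast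
  obtain k where k: "anc V p k v2" "\<And>x. anc V p x v2 \<Longrightarrow> L k \<le> L x"
    using ex_min_label_ancestor[OF path(7)] by blast
  have "L k < L v2"
    using path(7,8) k(2) unfolding TDM_def by force
  then have k_v2: "sanc V p k v2"
    using k(1) sanc_iff_anc_neq by auto
  have v2_v3: "sanc V p v2 v3"
    using path(3,8,9) sanc_iff_anc_neq by auto
  have "sanc V p v3 v4"
    using path(4,9,11) sanc_iff_anc_neq by auto
  then have v3_v: "sanc V p v3 v"
    using path(5) by (rule sanc_anc_trans)
  have v2_v: "sanc V p v2 v"
    using sanc_trans[OF v2_v3 v3_v] .
  have k_v: "sanc V p k v"
    using sanc_trans[OF k_v2 v2_v] .
  have "L v3 < L k"
    using TDM_label_less[OF inj path(9) sanc_anc_trans[OF k_v2 path(3)]] .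
  moreover have "L k < L v"
  proof -
    have "L k \<le> L v1" "L v1 \<le> L u"
      using k(2) path(1,2,6) unfolding TDM_def by blast+
    moreover have "L k \<noteq> L v"
      using sanc_label_neq[OF inj k_v] .
    ultimately show ?thesis
      using le by linarith
  qed
  moreover have "L v2 < L v"
    using no_132_label_less[OF inj no132 k_v2 v2_v \<open>L k < L v\<close>] .
  ultimately show ?thesis
    using contains_2314_iff k_v2 v2_v3 v3_v \<open>L k < L v2\<close> by blast
qed

lemma special_if_2314_instance:
  assumes inj: "inj_on L V" and no132: "\<not> contains_pat V p L [1, 3, 2]"
    and a_b: "sanc V p a b" and b_c: "sanc V p b c" and c_d: "sanc V p c d"
    and labels: "L c < L a" "L a < L b" "L b < L d"
  obtains m where "special V p L d" "tntn_between V p L m d" "L m < L d"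
proof -
  have inV: "a \<in> V" "b \<in> V" "c \<in> V" "d \<in> V"
    using sanc_in_V a_b b_c c_d by blast+
  have anc: "anc V p a b" "anc V p b c" "anc V p c d"
    using a_b b_c c_d sanc_iff_anc_neq by blast+
  obtain m1 where m1: "anc V p m1 a" "TDM V p L m1" "\<And>x. anc V p x a \<Longrightarrow> L m1 \<le> L x"
    using ex_min_label_ancestor[OF inV(1)] by blast
  obtain m3 where m3: "anc V p m3 c" "TDM V p L m3" "\<And>x. anc V p x c \<Longrightarrow> L m3 \<le> L x"
    using ex_min_label_ancestor[OF inV(3)] by blast
  have b_m3: "anc V p b m3"
  proof (rule ccontr)
    assume "\<not> anc V p b m3"
    then have m3_b: "sanc V p m3 b"
      using anc_linear[OF m3(1) anc(2)] anc_refl[OF inV(2)] sanc_iff_anc_neq by blast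
    have "L m3 \<noteq> L c"
      using sanc_label_neq[OF inj sanc_trans[OF m3_b b_c]] .
    then have "L m3 < L c"
      using m3(3)[OF anc_refl[OF inV(3)]] by simp
    then show False
      using no_132_label_less[OF inj no132 m3_b b_c] labels by linarith
  qed
  have not_TDM: "\<not> TDM V p L b" "\<not> TDM V p L d"
    using not_TDM_if_label_less anc labels anc_trans[OF anc(2,3)] by fastforce+
  have m1_between: "tntn_between V p L m1 d"
    unfolding tntn_between_def
    using anc_refl[OF anc_in_V[OF m1(1), THEN conjunct1]] anc_trans[OF m1(1) anc(1)] b_m3
      anc_trans[OF m3(1) anc(3)] anc_refl[OF inV(4)] m1(2) m3(2) inV(2,4) not_TDM
    by blast
  moreover have "special V p L d"
    unfolding special_def using inV(4) not_TDM(2) m1_between tntn_between_anc[OF m1_between] by blast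
  moreover have "L m1 < L d"
    using m1(3)[OF anc_refl[OF inV(1)]] labels by linarith
  ultimately show ?thesis
    using that by blast
qed

lemma P1_forest_if_avoids_2314:
  assumes "inj_on L V" "\<not> contains_pat V p L [1, 3, 2]" "\<not> contains_pat V p L [2, 3, 1, 4]"
  shows "P1_forest V p L"
  unfolding P1_forest_def
proof (intro allI impI)
  fix v u
  assume "special V p L v \<and> ceiling_of V p L u v"
  then have "tntn_between V p L u v"
    unfolding ceiling_of_def by blast
  then show "L v < L u"
    using contains_2314_if_tntn_between assms not_le by blast
qed

lemma not_P1_forest_if_contains_2314:
  assumes "inj_on L V" "\<not> contains_pat V p L [1, 3, 2]" "contains_pat V p L [2, 3, 1, 4]"
  shows "\<not> P1_forest V p L"
proof -
  obtain a b c d where "sanc V p a b" "sanc V p b c" "sanc V p c d"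
    "L c < L a" "L a < L b" "L b < L d"
    using assms(3) contains_2314_iff by blast
  then obtain m where d: "special V p L d" and m: "tntn_between V p L m d" "L m < L d"
    using special_if_2314_instance assms(1,2) by blast
  obtain u where u: "ceiling_of V p L u d"
    using ceiling_exists[OF m(1)] .
  have "L u < L d"
    using ceiling_label_le[OF u m(1)] m(2) by linarith
  then show ?thesis
    unfolding P1_forest_def using d u by force
qed

end

theorem lemma3p10:
  fixes V :: "'a set" and p :: "'a \<Rightarrow> 'a option" and L :: "'a \<Rightarrow> int"
  assumes "rooted_forest V p" and "inj_on L V"
    and "avoids_pat V p L [1, 3, 2]"
  shows "avoids_pat V p L [2, 3, 1, 4] \<longleftrightarrow> P1_forest V p L"
  using P1_forest_if_avoids_2314[OF assms(1,2)] not_P1_forest_if_contains_2314[OF assms(1,2)] assms(3)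
  unfolding avoids_pat_def by blast

end
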